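(* Let $t\ge 3$, let $\Gamma$ be a maximal triangle-free graph on vertex set $\{z_1,\dots,z_t\}$, and let $a,b$ be positive integers. Then the graph $\Gamma[a,b]$ has no triangle-free homomorphic image with fewer than $t$ vertices.
   Context: $M_{t,t}$ is the bipartite graph on $\{x_i,y_i\}_{i\in[t]}$ with $x_iy_j\in E$ iff $i\ne j$ (complete bipartite $K_{t,t}$ minus a perfect matching). $M_{t,t}\vee\Gamma$ is the disjoint union of $M_{t,t}$ and $\Gamma$ together with the edges $x_iz_i$ and $y_iz_i$ for all $i\in[t]$. $\Gamma[a,b]$ is obtained from $M_{t,t}\vee\Gamma$ by replacing each vertex of $M_{t,t}$ by an independent set of $a$ copies and each vertex of $\Gamma$ by an independent set of $b$ copies, each edge becoming a complete bipartite graph between the corresponding sets. A triangle-free homomorphic image of $G$ is a triangle-free graph $F$ with a map $V(G)\to V(F)$ sending edges to edges. *)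

theory Defs
  imports Main
begin

definition sgraph :: "'v set \<Rightarrow> ('v \<Rightarrow> 'v \<Rightarrow> bool) \<Rightarrow> bool" where
  "sgraph V E \<longleftrightarrow> (\<forall>x y. E x y \<longrightarrow> x \<in> V \<and> y \<in> V) \<and> (\<forall>x y. E x y \<longrightarrow> E y x) \<and> (\<forall>x. \<not> E x x)"

definition triangle_free :: "('v \<Rightarrow> 'v \<Rightarrow> bool) \<Rightarrow> bool" where
  "triangle_free E \<longleftrightarrow> \<not> (\<exists>x y z. E x y \<and> E y z \<and> E x z)"

definition add_edge :: "('v \<Rightarrow> 'v \<Rightarrow> bool) \<Rightarrow> 'v \<Rightarrow> 'v \<Rightarrow> ('v \<Rightarrow> 'v \<Rightarrow> bool)" where
  "add_edge E u w = (\<lambda>x y. E x y \<or> (x = u \<and> y = w) \<or> (x = w \<and> y = u))"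

definition maximal_triangle_free :: "'v set \<Rightarrow> ('v \<Rightarrow> 'v \<Rightarrow> bool) \<Rightarrow> bool" where
  "maximal_triangle_free V E \<longleftrightarrow> sgraph V E \<and> triangle_free E \<and>
     (\<forall>u\<in>V. \<forall>w\<in>V. u \<noteq> w \<and> \<not> E u w \<longrightarrow> \<not> triangle_free (add_edge E u w))"

definition graph_hom :: "'a set \<Rightarrow> ('a \<Rightarrow> 'a \<Rightarrow> bool) \<Rightarrow> 'b set \<Rightarrow> ('b \<Rightarrow> 'b \<Rightarrow> bool) \<Rightarrow> ('a \<Rightarrow> 'b) \<Rightarrow> bool" where
  "graph_hom V E W F f \<longleftrightarrow> (\<forall>x\<in>V. f x \<in> W) \<and> (\<forall>x y. E x y \<longrightarrow> F (f x) (f y))"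

definition tf_hom_image :: "'a set \<Rightarrow> ('a \<Rightarrow> 'a \<Rightarrow> bool) \<Rightarrow> 'b set \<Rightarrow> ('b \<Rightarrow> 'b \<Rightarrow> bool) \<Rightarrow> bool" where
  "tf_hom_image V E W F \<longleftrightarrow> sgraph W F \<and> triangle_free F \<and> (\<exists>f. graph_hom V E W F f)"

text \<open>Vertices of \<Gamma>[a,b]: BX i k is the k-th copy of x_(i+1), BY i k of y_(i+1),
  BZ i k the k-th copy of z_(i+1) (indices i < t, 0-based).\<close>
datatype bvert = BX nat nat | BY nat nat | BZ nat nat

definition blowup_V :: "nat \<Rightarrow> nat \<Rightarrow> nat \<Rightarrow> bvert set" where
  "blowup_V t a b = {BX i k | i k. i < t \<and> k < a} \<union> {BY i k | i k. i < t \<and> k < a}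
                     \<union> {BZ i k | i k. i < t \<and> k < b}"

text \<open>Edges of M_{t,t} \<or> \<Gamma>, where \<Gamma> is given by the edge relation G on {0..<t}.\<close>
definition base_E :: "(nat \<Rightarrow> nat \<Rightarrow> bool) \<Rightarrow> bvert \<Rightarrow> bvert \<Rightarrow> bool" where
  "base_E G u v = (case (u, v) of
       (BX i _, BY j _) \<Rightarrow> i \<noteq> j
     | (BY i _, BX j _) \<Rightarrow> i \<noteq> j
     | (BX i _, BZ j _) \<Rightarrow> i = j
     | (BZ i _, BX j _) \<Rightarrow> i = j
     | (BY i _, BZ j _) \<Rightarrow> i = j
     | (BZ i _, BY j _) \<Rightarrow> i = j
     | (BZ i _, BZ j _) \<Rightarrow> G i j
     | _ \<Rightarrow> False)"

definition blowup_E :: "nat \<Rightarrow> nat \<Rightarrow> nat \<Rightarrow> (nat \<Rightarrow> nat \<Rightarrow> bool) \<Rightarrow> bvert \<Rightarrow> bvert \<Rightarrow> bool" where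
  "blowup_E t a b G u v \<longleftrightarrow> u \<in> blowup_V t a b \<and> v \<in> blowup_V t a b \<and> base_E G u v"

end

theory Submission
  imports Defs
begin

text \<open>The images of the t vertices z_i are pairwise distinct. Indeed, for i \<noteq> j the path
  x_i y_j z_j together with the edge x_i z_i shows that identifying z_i with z_j closes a
  triangle.\<close>

lemma graph_hom_triangle_free_separates:
  assumes "graph_hom V E W F f" and "triangle_free F"
    and "E x u" and "E x y" and "E y v"
  shows "f u \<noteq> f v"
proof
  assume "f u = f v"
  moreover have "F (f x) (f u)" "F (f x) (f y)" "F (f y) (f v)"
    using assms(1,3-5) unfolding graph_hom_def by auto
  ultimately show False
    using assms(2) unfolding triangle_free_def by metis
qed

lemma blowup_V_first_copies:
  assumes "i < t" and "a > 0" and "b > 0"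
  shows "BX i 0 \<in> blowup_V t a b" and "BY i 0 \<in> blowup_V t a b" and "BZ i 0 \<in> blowup_V t a b"
  using assms unfolding blowup_V_def by auto

lemma blowup_E_first_copies:
  assumes "i < t" and "j < t" and "a > 0" and "b > 0"
  shows "i \<noteq> j \<Longrightarrow> blowup_E t a b G (BX i 0) (BY j 0)"
    and "blowup_E t a b G (BX i 0) (BZ i 0)"
    and "blowup_E t a b G (BY j 0) (BZ j 0)"
  using blowup_V_first_copies[OF assms(1,3,4)] blowup_V_first_copies[OF assms(2-4)]
  unfolding blowup_E_def base_E_def by auto

lemma graph_hom_triangle_free_inj_on_blowup_Z:
  assumes "graph_hom (blowup_V t a b) (blowup_E t a b G) W F f" and "triangle_free F"
    and "a > 0" and "b > 0"
  shows "inj_on (\<lambda>i. f (BZ i 0)) {0..<t}"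
proof (rule inj_onI)
  fix i j
  assume "i \<in> {0..<t}" "j \<in> {0..<t}" "f (BZ i 0) = f (BZ j 0)"
  then show "i = j"
    using graph_hom_triangle_free_separates[OF assms(1,2)] blowup_E_first_copies assms(3,4)
    by (metis atLeastLessThan_iff)
qed

theorem proposition3p3:
  fixes t a b :: nat and G :: "nat \<Rightarrow> nat \<Rightarrow> bool"
    and W :: "'v set" and F :: "'v \<Rightarrow> 'v \<Rightarrow> bool"
  assumes "t \<ge> 3"
    and "maximal_triangle_free {0..<t} G"
    and "a > 0" and "b > 0"
    and "tf_hom_image (blowup_V t a b) (blowup_E t a b G) W F"
    and "finite W"
  shows "card W \<ge> t"
proof -
  from assms(5) obtain f where "triangle_free F"
    and hom: "graph_hom (blowup_V t a b) (blowup_E t a b G) W F f"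
    unfolding tf_hom_image_def by blast
  then have "inj_on (\<lambda>i. f (BZ i 0)) {0..<t}"
    using graph_hom_triangle_free_inj_on_blowup_Z assms(3,4) by blast
  moreover have "(\<lambda>i. f (BZ i 0)) ` {0..<t} \<subseteq> W"
    using hom blowup_V_first_copies(3) assms(3,4) unfolding graph_hom_def by auto
  ultimately show ?thesis
    using card_inj_on_le[OF _ _ assms(6)] by fastforce
qed

end
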